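(* Let $H$ be an $r$-cross-free hypergraph on $V=[n]$, and let $\emptyset$ be the hypergraph on $V$ with no hyperedges. Then $$|H\setminus \mathrm{cl}_r(\emptyset)|\le|\mathrm{cl}_r(H)\setminus\mathrm{cl}_r(\emptyset)|\le 2\,|H\setminus\mathrm{cl}_r(\emptyset)|.$$
   Context: Hypergraphs on $V$ are identified with their hyperedge sets; set differences and cardinalities are of hyperedge sets. $\mathcal K_r(n)$ is the class of hypergraphs $\mathcal E$ on $V$ satisfying: (R0) every $X\subseteq V$ with $|X|\le r$ is in $\mathcal E$; (R1) $A\in\mathcal E\Rightarrow V\setminus A\in\mathcal E$; (R2) $A,B\in\mathcal E$ and $|A\cap B|\ge r\Rightarrow A\cup B\in\mathcal E$. $\mathcal K^0_r(n)$ is the class satisfying (R0) and (R1) only. $\mathrm{cl}_r(H)$ (resp. $\mathrm{cl}^0_r(H)$) is the intersection of all hypergraphs in $\mathcal K_r(n)$ (resp. $\mathcal K^0_r(n)$) containing $H$. $A,B\subseteq V$ are $r$-orthogonal if $\mathrm{cl}_r(\{A,B\})=\mathrm{cl}^0_r(\{A,B\})$. $H$ is $r$-cross-free if every pair of its hyperedges is $r$-orthogonal. *)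

theory Defs
  imports Main
begin

definition ground :: "nat \<Rightarrow> nat set" where
  "ground n = {1..n}"

definition K0 :: "nat \<Rightarrow> nat \<Rightarrow> nat set set set" where
  "K0 r n = {E. E \<subseteq> Pow (ground n)
     \<and> (\<forall>X. X \<subseteq> ground n \<and> card X \<le> r \<longrightarrow> X \<in> E)
     \<and> (\<forall>A\<in>E. ground n - A \<in> E)}"

definition K :: "nat \<Rightarrow> nat \<Rightarrow> nat set set set" where
  "K r n = {E. E \<in> K0 r n
     \<and> (\<forall>A\<in>E. \<forall>B\<in>E. card (A \<inter> B) \<ge> r \<longrightarrow> A \<union> B \<in> E)}"

definition cl :: "nat \<Rightarrow> nat \<Rightarrow> nat set set \<Rightarrow> nat set set" where
  "cl r n H = \<Inter> {E. E \<in> K r n \<and> H \<subseteq> E}"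

definition cl0 :: "nat \<Rightarrow> nat \<Rightarrow> nat set set \<Rightarrow> nat set set" where
  "cl0 r n H = \<Inter> {E. E \<in> K0 r n \<and> H \<subseteq> E}"

definition orthogonal :: "nat \<Rightarrow> nat \<Rightarrow> nat set \<Rightarrow> nat set \<Rightarrow> bool" where
  "orthogonal r n A B \<longleftrightarrow> cl r n {A, B} = cl0 r n {A, B}"

definition cross_free :: "nat \<Rightarrow> nat \<Rightarrow> nat set set \<Rightarrow> bool" where
  "cross_free r n H \<longleftrightarrow> (\<forall>A\<in>H. \<forall>B\<in>H. A \<noteq> B \<longrightarrow> orthogonal r n A B)"

end

theory Submission
  imports Defs
begin

text \<open>The sets X with card X \<le> r or card (V - X) \<le> r form a member of K_r(n) that lies in
  every member of K^0_r(n), so they are cl_r of the empty hypergraph. For A, B \<subseteq> V, cl^0_r({A, B})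
  consists of these small sets together with A, B and their complements, so A and B are orthogonal
  exactly when this hypergraph satisfies (R2); it always does when A = B. For a cross-free H it
  follows that the small sets together with the hyperedges of H and their complements satisfy (R2),
  hence contain cl_r(H): every hyperedge of cl_r(H) that is not small is a hyperedge of H or the
  complement of one, whence the factor 2.\<close>

definition small_sets :: "nat \<Rightarrow> nat \<Rightarrow> nat set set" where
  "small_sets r n = {X. X \<subseteq> ground n \<and> (card X \<le> r \<or> card (ground n - X) \<le> r)}"

definition pair_hull :: "nat \<Rightarrow> nat \<Rightarrow> nat set \<Rightarrow> nat set \<Rightarrow> nat set set" where
  "pair_hull r n A B = small_sets r n \<union> {A, B, ground n - A, ground n - B}"

definition symmetric_hull :: "nat \<Rightarrow> nat \<Rightarrow> nat set set \<Rightarrow> nat set set" where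
  "symmetric_hull r n H = small_sets r n \<union> H \<union> (\<lambda>A. ground n - A) ` H"

definition union_closed :: "nat \<Rightarrow> nat set set \<Rightarrow> bool" where
  "union_closed r E \<longleftrightarrow> (\<forall>X\<in>E. \<forall>Y\<in>E. r \<le> card (X \<inter> Y) \<longrightarrow> X \<union> Y \<in> E)"

lemma union_closedI:
  "(\<And>X Y. X \<in> E \<Longrightarrow> Y \<in> E \<Longrightarrow> r \<le> card (X \<inter> Y) \<Longrightarrow> X \<union> Y \<in> E) \<Longrightarrow> union_closed r E"
  by (simp add: union_closed_def)

lemma union_closedD:
  "union_closed r E \<Longrightarrow> X \<in> E \<Longrightarrow> Y \<in> E \<Longrightarrow> r \<le> card (X \<inter> Y) \<Longrightarrow> X \<union> Y \<in> E"
  by (simp add: union_closed_def)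

lemma finite_ground [simp]: "finite (ground n)"
  by (simp add: ground_def)

lemma K_iff: "E \<in> K r n \<longleftrightarrow> E \<in> K0 r n \<and> union_closed r E"
  by (auto simp: K_def union_closed_def)

lemma cl_least: "E \<in> K r n \<Longrightarrow> H \<subseteq> E \<Longrightarrow> cl r n H \<subseteq> E"
  unfolding cl_def by (rule Inter_lower) simp

lemma cl0_least: "E \<in> K0 r n \<Longrightarrow> H \<subseteq> E \<Longrightarrow> cl0 r n H \<subseteq> E"
  unfolding cl0_def by (rule Inter_lower) simp

lemma subset_cl: "H \<subseteq> cl r n H"
  unfolding cl_def by blast

lemma cl0_subset_cl: "cl0 r n H \<subseteq> cl r n H"
  unfolding cl_def cl0_def K_def by blast

lemma union_closed_cl: "union_closed r (cl r n H)"
  unfolding union_closed_def cl_def K_def by blast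

lemma Pow_ground_in_K: "Pow (ground n) \<in> K r n"
  unfolding K_def K0_def by auto

lemma cl_subset_Pow: "H \<subseteq> Pow (ground n) \<Longrightarrow> cl r n H \<subseteq> Pow (ground n)"
  by (rule cl_least[OF Pow_ground_in_K])

lemma diff_small_sets: "X \<in> small_sets r n \<Longrightarrow> ground n - X \<in> small_sets r n"
  unfolding small_sets_def by (auto simp: double_diff)

lemma ground_in_small_sets: "ground n \<in> small_sets r n"
  by (simp add: small_sets_def)

lemma empty_in_small_sets: "{} \<in> small_sets r n"
  by (simp add: small_sets_def)

lemma small_sets_subset_K0:
  assumes "E \<in> K0 r n"
  shows "small_sets r n \<subseteq> E"
proof
  fix X assume X: "X \<in> small_sets r n"
  show "X \<in> E"
  proof (cases "card X \<le> r")
    case True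
    then show ?thesis using assms X unfolding K0_def small_sets_def by auto
  next
    case False
    with X have "X \<subseteq> ground n" "card (ground n - X) \<le> r"
      unfolding small_sets_def by auto
    with assms have "ground n - (ground n - X) \<in> E"
      unfolding K0_def by auto
    with \<open>X \<subseteq> ground n\<close> show ?thesis by (simp add: double_diff)
  qed
qed

lemma union_small_set:
  assumes X: "X \<in> small_sets r n" and Y: "Y \<subseteq> ground n" and XY: "r \<le> card (X \<inter> Y)"
  shows "X \<union> Y \<in> insert Y (small_sets r n)"
proof (cases "card X \<le> r")
  case True
  have "finite X"
    using X rev_finite_subset[OF finite_ground] by (auto simp: small_sets_def)
  with True XY have "X \<inter> Y = X"
    by (intro card_seteq) auto
  then have "X \<union> Y = Y"
    by blast
  then show ?thesis
    by simp
next
  case False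
  with X have "card (ground n - X) \<le> r"
    by (simp add: small_sets_def)
  moreover have "card (ground n - (X \<union> Y)) \<le> card (ground n - X)"
    by (rule card_mono) auto
  ultimately have "card (ground n - (X \<union> Y)) \<le> r"
    by linarith
  with X Y show ?thesis unfolding small_sets_def by auto
qed

lemma small_sets_in_K: "small_sets r n \<in> K r n"
proof -
  have "small_sets r n \<in> K0 r n"
    unfolding K0_def using diff_small_sets by (auto simp: small_sets_def)
  moreover have "X \<union> Y \<in> small_sets r n"
    if X: "X \<in> small_sets r n" and Y: "Y \<in> small_sets r n" and XY: "r \<le> card (X \<inter> Y)" for X Y
  proof -
    have "Y \<subseteq> ground n"
      using Y by (simp add: small_sets_def)
    with X XY have "X \<union> Y \<in> insert Y (small_sets r n)"
      by (intro union_small_set)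
    with Y show ?thesis
      by (simp add: insert_absorb)
  qed
  ultimately show ?thesis
    by (simp add: K_iff union_closedI)
qed

lemma cl_empty: "cl r n {} = small_sets r n"
proof
  show "cl r n {} \<subseteq> small_sets r n"
    using cl_least[OF small_sets_in_K] by blast
  show "small_sets r n \<subseteq> cl r n {}"
    unfolding cl_def using small_sets_subset_K0 by (auto simp: K_def)
qed

lemma insert_small_sets_subset_pair_hull:
  "Y \<in> pair_hull r n A B \<Longrightarrow> insert Y (small_sets r n) \<subseteq> pair_hull r n A B"
  unfolding pair_hull_def by blast

lemma pair_hull_commute: "pair_hull r n A B = pair_hull r n B A"
  unfolding pair_hull_def by auto

lemma pair_hull_empty: "pair_hull r n {} B = pair_hull r n B B"
  unfolding pair_hull_def small_sets_def by auto

lemma pair_hull_in_K0: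
  "A \<subseteq> ground n \<Longrightarrow> B \<subseteq> ground n \<Longrightarrow> pair_hull r n A B \<in> K0 r n"
  unfolding K0_def pair_hull_def using diff_small_sets[of _ r n]
  by (auto simp: small_sets_def double_diff)

lemma cl0_pair:
  assumes "A \<subseteq> ground n" "B \<subseteq> ground n"
  shows "cl0 r n {A, B} = pair_hull r n A B"
proof
  show "cl0 r n {A, B} \<subseteq> pair_hull r n A B"
    using cl0_least[OF pair_hull_in_K0[OF assms]] by (auto simp: pair_hull_def)
  show "pair_hull r n A B \<subseteq> cl0 r n {A, B}"
    unfolding cl0_def pair_hull_def using small_sets_subset_K0 by (auto simp: K0_def)
qed

lemma orthogonal_iff_union_closed:
  assumes "A \<subseteq> ground n" "B \<subseteq> ground n"
  shows "orthogonal r n A B \<longleftrightarrow> union_closed r (pair_hull r n A B)"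
proof
  assume "orthogonal r n A B"
  then show "union_closed r (pair_hull r n A B)"
    using union_closed_cl cl0_pair[OF assms] by (metis orthogonal_def)
next
  assume "union_closed r (pair_hull r n A B)"
  with pair_hull_in_K0[OF assms] have "pair_hull r n A B \<in> K r n"
    by (simp add: K_iff)
  then have "cl r n {A, B} \<subseteq> cl0 r n {A, B}"
    using cl_least cl0_pair[OF assms] by (auto simp: pair_hull_def)
  then show "orthogonal r n A B"
    unfolding orthogonal_def using cl0_subset_cl by (rule subset_antisym)
qed

lemma orthogonal_refl:
  assumes A: "A \<subseteq> ground n"
  shows "orthogonal r n A A"
proof -
  have "X \<union> Y \<in> pair_hull r n A A"
    if X: "X \<in> pair_hull r n A A" and Y: "Y \<in> pair_hull r n A A" and XY: "r \<le> card (X \<inter> Y)"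
    for X Y
  proof -
    have ground: "X \<subseteq> ground n" "Y \<subseteq> ground n"
      using X Y A by (auto simp: pair_hull_def small_sets_def)
    have "X \<in> small_sets r n \<or> Y \<in> small_sets r n
        \<or> X \<in> {A, ground n - A} \<and> Y \<in> {A, ground n - A}"
      using X Y unfolding pair_hull_def by blast
    then consider "X \<in> small_sets r n" | "Y \<in> small_sets r n" | "X = Y" | "X \<union> Y = ground n"
      using A by auto
    then show ?thesis
    proof cases
      case 1
      have "X \<union> Y \<in> insert Y (small_sets r n)"
        using union_small_set[OF 1 ground(2) XY] .
      with insert_small_sets_subset_pair_hull[OF Y] show ?thesis
        by (rule subsetD)
    next
      case 2
      have "Y \<union> X \<in> insert X (small_sets r n)"
        using union_small_set[OF 2 ground(1)] XY by (simp add: Int_commute)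
      then have "X \<union> Y \<in> insert X (small_sets r n)"
        by (simp only: Un_commute[of X Y])
      with insert_small_sets_subset_pair_hull[OF X] show ?thesis
        by (rule subsetD)
    next
      case 3
      with X show ?thesis
        by simp
    next
      case 4
      then show ?thesis
        by (simp add: pair_hull_def ground_in_small_sets)
    qed
  qed
  then show ?thesis
    by (simp add: orthogonal_iff_union_closed[OF A A] union_closedI)
qed

lemma cross_free_union_closed_pair_hull:
  assumes H: "H \<subseteq> Pow (ground n)" and "cross_free r n H"
    and A: "A \<in> insert {} H" and B: "B \<in> insert {} H"
  shows "union_closed r (pair_hull r n A B)"
proof (cases "A = {} \<or> B = {} \<or> A = B")
  case True
  then consider "A = {}" | "B = {}" | "A = B"
    by blast
  then have "pair_hull r n A B = pair_hull r n (A \<union> B) (A \<union> B)"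
  proof cases
    case 1
    then show ?thesis by (simp add: pair_hull_empty)
  next
    case 2
    then show ?thesis using pair_hull_commute[of r n A "{}"] pair_hull_empty[of r n A] by simp
  next
    case 3
    then show ?thesis by simp
  qed
  moreover have "A \<union> B \<subseteq> ground n"
    using A B H by auto
  then have "union_closed r (pair_hull r n (A \<union> B) (A \<union> B))"
    using orthogonal_refl orthogonal_iff_union_closed by blast
  ultimately show ?thesis
    by simp
next
  case False
  with A B \<open>cross_free r n H\<close> have "orthogonal r n A B"
    by (auto simp: cross_free_def)
  moreover have "A \<subseteq> ground n" "B \<subseteq> ground n"
    using A B H by auto
  ultimately show ?thesis
    using orthogonal_iff_union_closed by blast
qed

lemma symmetric_hull_in_K0:
  assumes H: "H \<subseteq> Pow (ground n)"
  shows "symmetric_hull r n H \<in> K0 r n"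
proof -
  have "symmetric_hull r n H \<subseteq> Pow (ground n)"
    using H by (auto simp: symmetric_hull_def small_sets_def)
  moreover have "X \<in> symmetric_hull r n H" if "X \<subseteq> ground n" "card X \<le> r" for X
    using that by (simp add: symmetric_hull_def small_sets_def)
  moreover have "ground n - X \<in> symmetric_hull r n H" if X: "X \<in> symmetric_hull r n H" for X
  proof -
    consider "X \<in> small_sets r n" | "X \<in> H" | A where "A \<in> H" "X = ground n - A"
      using X unfolding symmetric_hull_def by blast
    then show ?thesis
    proof cases
      case 1
      then show ?thesis by (simp add: symmetric_hull_def diff_small_sets)
    next
      case 2
      then show ?thesis by (simp add: symmetric_hull_def)
    next
      case 3
      with H have "ground n - X = A"
        by (auto simp: double_diff)
      with \<open>A \<in> H\<close> show ?thesis
        by (simp add: symmetric_hull_def)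
    qed
  qed
  ultimately show ?thesis
    unfolding K0_def by blast
qed

lemma pair_hull_subset_symmetric_hull:
  assumes "A \<in> insert {} H" "B \<in> insert {} H"
  shows "pair_hull r n A B \<subseteq> symmetric_hull r n H"
proof -
  have "C \<in> symmetric_hull r n H \<and> ground n - C \<in> symmetric_hull r n H" if "C \<in> insert {} H" for C
  proof (cases "C = {}")
    case True
    then show ?thesis
      by (simp add: symmetric_hull_def empty_in_small_sets ground_in_small_sets)
  next
    case False
    with that have "C \<in> H"
      by simp
    then show ?thesis
      unfolding symmetric_hull_def by blast
  qed
  with assms show ?thesis
    unfolding pair_hull_def by (auto simp: symmetric_hull_def)
qed

lemma symmetric_hull_in_K:
  assumes H: "H \<subseteq> Pow (ground n)" and "cross_free r n H"
  shows "symmetric_hull r n H \<in> K r n"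
proof -
  have hull_cover: "\<exists>A\<in>insert {} H. X \<in> pair_hull r n A A" if "X \<in> symmetric_hull r n H" for X
    using that unfolding symmetric_hull_def pair_hull_def by blast
  have "X \<union> Y \<in> symmetric_hull r n H"
    if X: "X \<in> symmetric_hull r n H" and Y: "Y \<in> symmetric_hull r n H"
      and XY: "r \<le> card (X \<inter> Y)" for X Y
  proof -
    from hull_cover[OF X] obtain A where A: "A \<in> insert {} H" "X \<in> pair_hull r n A A" ..
    from hull_cover[OF Y] obtain B where B: "B \<in> insert {} H" "Y \<in> pair_hull r n B B" ..
    note AB = A(1) B(1)
    from A(2) B(2) have "X \<in> pair_hull r n A B" "Y \<in> pair_hull r n A B"
      unfolding pair_hull_def by blast+
    with XY cross_free_union_closed_pair_hull[OF assms AB] have "X \<union> Y \<in> pair_hull r n A B"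
      by (blast intro: union_closedD)
    with pair_hull_subset_symmetric_hull[OF AB] show ?thesis
      by (rule subsetD)
  qed
  with symmetric_hull_in_K0[OF H] show ?thesis
    by (simp add: K_iff union_closedI)
qed

lemma cl_subset_symmetric_hull:
  assumes "H \<subseteq> Pow (ground n)" and "cross_free r n H"
  shows "cl r n H \<subseteq> symmetric_hull r n H"
  by (rule cl_least[OF symmetric_hull_in_K[OF assms]]) (auto simp: symmetric_hull_def)

lemma symmetric_hull_diff_small_sets:
  "symmetric_hull r n H - small_sets r n
    \<subseteq> (H - small_sets r n) \<union> (\<lambda>A. ground n - A) ` (H - small_sets r n)"
proof
  fix X assume X: "X \<in> symmetric_hull r n H - small_sets r n"
  show "X \<in> (H - small_sets r n) \<union> (\<lambda>A. ground n - A) ` (H - small_sets r n)"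
  proof (cases "X \<in> H")
    case True
    with X show ?thesis by blast
  next
    case False
    with X obtain A where A: "A \<in> H" "X = ground n - A"
      unfolding symmetric_hull_def by blast
    with X diff_small_sets[of A r n] have "A \<notin> small_sets r n"
      by blast
    with A show ?thesis
      by blast
  qed
qed

lemma card_Un_image_le: "finite A \<Longrightarrow> card (A \<union> f ` A) \<le> 2 * card A"
  using card_Un_le[of A "f ` A"] card_image_le[of A f] by linarith

theorem mainTheorem17:
  fixes r n :: nat and H :: "nat set set"
  assumes "H \<subseteq> Pow (ground n)"
    and "cross_free r n H"
  shows "card (H - cl r n {}) \<le> card (cl r n H - cl r n {})
    \<and> card (cl r n H - cl r n {}) \<le> 2 * card (H - cl r n {})"
proof -
  let ?S = "small_sets r n" and ?H' = "H - small_sets r n"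
  have finite: "finite (cl r n H)" "finite ?H'"
    using finite_subset[OF cl_subset_Pow[OF assms(1)]] finite_subset[OF assms(1)] by simp_all
  have "cl r n H - ?S \<subseteq> symmetric_hull r n H - ?S"
    using cl_subset_symmetric_hull[OF assms] by blast
  also have "\<dots> \<subseteq> ?H' \<union> (\<lambda>A. ground n - A) ` ?H'"
    by (rule symmetric_hull_diff_small_sets)
  finally have "card (cl r n H - ?S) \<le> card (?H' \<union> (\<lambda>A. ground n - A) ` ?H')"
    by (rule card_mono[rotated]) (simp add: finite(2))
  also have "\<dots> \<le> 2 * card ?H'"
    by (rule card_Un_image_le[OF finite(2)])
  finally have "card (cl r n H - ?S) \<le> 2 * card ?H'" .
  moreover have "card ?H' \<le> card (cl r n H - ?S)"
    using subset_cl finite(1) by (intro card_mono) auto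
  ultimately show ?thesis
    unfolding cl_empty by simp
qed

end
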